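(* Let $f: \mathbb{R}^n \to \mathbb{R}^n$ be topical. Then $$\inf \Lambda(f) = \inf_{x\in\mathbb{R}^n} \max_{1\le i\le n} (f_i(x) - x_i) = \overline{\chi}(f).$$
   Context: $f$ is topical if $f(x+h) = f(x)+h$ for all $h\in\mathbb{R}$ (scalar added to each coordinate) and $x\le y$ componentwise implies $f(x)\le f(y)$. $S^\lambda(f) = \{x : f(x) \le \lambda + x\}$ and $\Lambda(f) = \{\lambda\in\mathbb{R} : S^\lambda(f)\ne\emptyset\}$. The upper cycle time is $\overline{\chi}(f) = \lim_{k\to\infty} \max_i f^k_i(x)/k$, a limit that exists and is independent of $x \in \mathbb{R}^n$. *)

theory Defs
  imports "HOL-Analysis.Analysis"
begin

definition topical :: "(real^'n \<Rightarrow> real^'n) \<Rightarrow> bool" where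
  "topical f \<longleftrightarrow>
     (\<forall>x h. f (x + (\<chi> i. h)) = f x + (\<chi> i. h)) \<and>
     (\<forall>x y. (\<forall>i. x $ i \<le> y $ i) \<longrightarrow> (\<forall>i. f x $ i \<le> f y $ i))"

definition sublevel :: "(real^'n \<Rightarrow> real^'n) \<Rightarrow> real \<Rightarrow> (real^'n) set" where
  "sublevel f lam = {x. \<forall>i. f x $ i \<le> lam + x $ i}"

definition Lambda_set :: "(real^'n \<Rightarrow> real^'n) \<Rightarrow> real set" where
  "Lambda_set f = {lam. sublevel f lam \<noteq> {}}"

text \<open>Upper cycle time, computed from the starting point x (the limit exists
  and is independent of x).\<close>
definition upper_cycle_time :: "(real^'n \<Rightarrow> real^'n) \<Rightarrow> real^'n \<Rightarrow> real" where
  "upper_cycle_time f x = lim (\<lambda>k. Max (range (\<lambda>i. (f ^^ k) x $ i)) / real k)"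

end

theory Submission
  imports Defs
begin

text \<open>Write \<open>M x = max\<^sub>i (f\<^sub>i x - x\<^sub>i)\<close>. Then \<open>M x \<le> \<lambda>\<close> iff \<open>x \<in> S\<^sup>\<lambda>(f)\<close>, so \<open>\<Lambda>(f)\<close> is the
  upward closure of the range of \<open>M\<close> and both infima agree; call the common value \<open>\<mu>\<close>.
  If \<open>x \<in> S\<^sup>\<lambda>(f)\<close>, monotonicity and additive homogeneity give \<open>f\<^sup>k x \<le> x + k\<lambda>\<close>, and
  since every \<open>f\<^sup>k\<close> is nonexpansive in the sup-norm the same linear bound holds, up to
  a constant, for every orbit; hence the cycle time is at most \<open>\<mu>\<close>. Conversely, if
  \<open>f\<^sup>N z \<le> z + N\<lambda>\<close> for some \<open>N > 0\<close>, then the componentwise minimum of the vectors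
  \<open>f\<^sup>j z - j\<lambda>\<close> (\<open>j < N\<close>) lies in \<open>S\<^sup>\<lambda>(f)\<close>. So for \<open>\<lambda> < \<mu>\<close> no orbit satisfies
  \<open>f\<^sup>k x \<le> x + k\<lambda>\<close>, and the cycle time is at least \<open>\<mu>\<close>.\<close>

lemma topical_mono:
  assumes "topical f" "\<forall>i. x $ i \<le> y $ i"
  shows "f x $ i \<le> f y $ i"
  using assms unfolding topical_def by blast

lemma topical_add_const:
  assumes "topical f"
  shows "f (x + (\<chi> i. h)) $ i = f x $ i + h"
  using assms unfolding topical_def by simp

lemma topical_le_shift:
  assumes "topical f" "\<forall>i. x $ i \<le> y $ i + h"
  shows "f x $ i \<le> f y $ i + h"
proof -
  have "f x $ i \<le> f (y + (\<chi> i. h)) $ i"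
    using assms by (intro topical_mono) auto
  also have "\<dots> = f y $ i + h"
    using topical_add_const[OF assms(1)] .
  finally show ?thesis .
qed

lemma topical_funpow:
  assumes "topical f"
  shows "topical (f ^^ k)"
  by (induction k) (use assms in \<open>auto simp: topical_def\<close>)

lemma funpow_le_of_sublevel:
  assumes "topical f" "y \<in> sublevel f lam"
  shows "(f ^^ k) y $ i \<le> y $ i + real k * lam"
proof (induction k arbitrary: i)
  case 0
  then show ?case by simp
next
  case (Suc k)
  have "f ((f ^^ k) y) $ i \<le> f y $ i + real k * lam"
    using Suc by (intro topical_le_shift[OF assms(1)]) auto
  moreover have "f y $ i \<le> lam + y $ i"
    using assms(2) by (simp add: sublevel_def)
  ultimately show ?case by (simp add: algebra_simps)
qed

lemma sublevel_nonempty_of_funpow_le: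
  assumes "topical f" "0 < N" "\<forall>i. (f ^^ N) z $ i \<le> z $ i + real N * lam"
  shows "sublevel f lam \<noteq> {}"
proof -
  define g where "g i j = (f ^^ j) z $ i - real j * lam" for i j
  define x where "x = (\<chi> i. Min (g i ` {..<N}))"
  have step: "f x $ i - lam \<le> g i (Suc j)" if "j < N" for i j
  proof -
    have "\<forall>k. x $ k \<le> (f ^^ j) z $ k + - (real j * lam)"
      using that by (auto simp: x_def g_def intro!: Min_le)
    then have "f x $ i \<le> f ((f ^^ j) z) $ i + - (real j * lam)"
      by (rule topical_le_shift[OF assms(1)])
    then show ?thesis by (simp add: g_def algebra_simps)
  qed
  have "f x $ i - lam \<le> g i j" if "j < N" for i j
  proof (cases j)
    case 0
    \<comment> \<open>the hypothesis closes the cycle: \<open>g i N \<le> g i 0\<close>\<close>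
    have "f x $ i - lam \<le> g i N"
      using step[of "N - 1" i] \<open>0 < N\<close> by simp
    also have "\<dots> \<le> g i j"
      using assms(3)[rule_format, of i] 0 by (simp add: g_def)
    finally show ?thesis .
  next
    case (Suc j')
    then show ?thesis using step that by simp
  qed
  then have "f x $ i - lam \<le> Min (g i ` {..<N})" for i
    using \<open>0 < N\<close> by (intro Min.boundedI) auto
  then have "f x $ i \<le> lam + x $ i" for i
    by (simp add: x_def algebra_simps)
  then have "x \<in> sublevel f lam"
    by (simp add: sublevel_def)
  then show ?thesis by blast
qed

lemma funpow_le_add_max_diff:
  assumes "topical f"
  shows "(f ^^ k) x $ i \<le> (f ^^ k) y $ i + Max (range (\<lambda>j. x $ j - y $ j))"
proof (rule topical_le_shift[OF topical_funpow[OF assms]], rule allI)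
  fix j
  have "x $ j - y $ j \<le> Max (range (\<lambda>j. x $ j - y $ j))"
    by (rule Max_ge) auto
  then show "x $ j \<le> y $ j + Max (range (\<lambda>j. x $ j - y $ j))" by linarith
qed

lemma max_funpow_upper_bound:
  assumes "topical f" "y \<in> sublevel f lam"
  obtains C where "\<And>k. Max (range (\<lambda>i. (f ^^ k) x $ i)) \<le> C + real k * lam"
proof
  fix k
  let ?C = "Max (range (\<lambda>i. y $ i)) + Max (range (\<lambda>j. x $ j - y $ j))"
  have "(f ^^ k) x $ i \<le> ?C + real k * lam" for i
  proof -
    have "y $ i \<le> Max (range (\<lambda>i. y $ i))"
      by (rule Max_ge) auto
    then show ?thesis
      using funpow_le_add_max_diff[OF assms(1), of k x i y]
        funpow_le_of_sublevel[OF assms, of k i] by linarith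
  qed
  then show "Max (range (\<lambda>i. (f ^^ k) x $ i)) \<le> ?C + real k * lam"
    by (subst Max_le_iff) auto
qed

lemma max_funpow_lower_bound:
  assumes "topical f" "sublevel f lam = {}" "0 < k"
  shows "Min (range (\<lambda>i. x $ i)) + real k * lam < Max (range (\<lambda>i. (f ^^ k) x $ i))"
proof -
  obtain i where i: "x $ i + real k * lam < (f ^^ k) x $ i"
    using sublevel_nonempty_of_funpow_le[OF assms(1,3)] assms(2) by (meson not_le)
  have "Min (range (\<lambda>i. x $ i)) \<le> x $ i"
    by (rule Min_le) auto
  moreover have "(f ^^ k) x $ i \<le> Max (range (\<lambda>i. (f ^^ k) x $ i))"
    by (rule Max_ge) auto
  ultimately show ?thesis using i by linarith
qed

definition max_increment :: "(real^'n \<Rightarrow> real^'n) \<Rightarrow> real^'n \<Rightarrow> real" where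
  "max_increment f x = Max (range (\<lambda>i. f x $ i - x $ i))"

lemma max_increment_le_iff: "max_increment f x \<le> c \<longleftrightarrow> x \<in> sublevel f c"
  by (auto simp: max_increment_def sublevel_def Max_le_iff algebra_simps)

lemma max_increment_lower_bound:
  fixes f :: "real^'n \<Rightarrow> real^'n"
  assumes "topical f"
  shows "Min (range (\<lambda>i. f 0 $ i)) \<le> max_increment f x"
proof -
  have "Min (range (\<lambda>i. x $ i)) \<in> range (\<lambda>i. x $ i)"
    by (rule Min_in) auto
  then obtain j where j: "x $ j = Min (range (\<lambda>i. x $ i))"
    by (metis rangeE)
  have "x $ j \<le> x $ i" for i
    unfolding j by (rule Min_le) auto
  then have "\<forall>i. (0::real^'n) $ i \<le> x $ i + - x $ j"
    by simp
  then have "f 0 $ j \<le> f x $ j + - x $ j"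
    by (rule topical_le_shift[OF assms])
  moreover have "Min (range (\<lambda>i. f 0 $ i)) \<le> f 0 $ j"
    by (rule Min_le) auto
  moreover have "f x $ j - x $ j \<le> max_increment f x"
    unfolding max_increment_def by (rule Max_ge) auto
  ultimately show ?thesis by linarith
qed

lemma bdd_below_max_increment:
  assumes "topical f"
  shows "bdd_below (range (max_increment f))"
  using max_increment_lower_bound[OF assms] by (intro bdd_belowI2)

lemma Inf_upward_closure:
  fixes M :: "'a \<Rightarrow> real"
  assumes "bdd_below (range M)"
  shows "Inf {c. \<exists>x. M x \<le> c} = Inf (range M)"
proof (rule antisym)
  have "bdd_below {c. \<exists>x. M x \<le> c}"
    using assms by (auto simp: bdd_below_def intro: order_trans)
  then show "Inf {c. \<exists>x. M x \<le> c} \<le> Inf (range M)"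
    by (intro cInf_mono) auto
  show "Inf (range M) \<le> Inf {c. \<exists>x. M x \<le> c}"
    using assms by (intro cInf_mono) auto
qed

lemma Inf_Lambda_set:
  assumes "topical f"
  shows "Inf (Lambda_set f) = Inf (range (max_increment f))"
proof -
  have "Lambda_set f = {c. \<exists>x. max_increment f x \<le> c}"
    by (auto simp: Lambda_set_def max_increment_le_iff)
  then show ?thesis
    using Inf_upward_closure[OF bdd_below_max_increment[OF assms]] by simp
qed

lemma LIMSEQ_max_funpow_div:
  assumes "topical f"
  shows "(\<lambda>k. Max (range (\<lambda>i. (f ^^ k) x $ i)) / real k) \<longlonglongrightarrow> Inf (range (max_increment f))"
    (is "(\<lambda>k. ?T k / real k) \<longlonglongrightarrow> ?\<mu>")
proof (rule order_tendstoI)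
  fix a
  assume "?\<mu> < a"
  then obtain y where y: "max_increment f y < a"
    using cInf_less_iff[OF _ bdd_below_max_increment[OF assms]] by auto
  define lam where "lam = max_increment f y"
  then have "y \<in> sublevel f lam"
    using max_increment_le_iff by blast
  then obtain C where C: "\<And>k. ?T k \<le> C + real k * lam"
    using max_funpow_upper_bound[OF assms] by blast
  have "(\<lambda>k. C / real k + lam) \<longlonglongrightarrow> 0 + lam"
    by (intro tendsto_intros)
  then have "eventually (\<lambda>k. C / real k + lam < a) sequentially"
    using y lam_def by (intro order_tendstoD) auto
  then show "eventually (\<lambda>k. ?T k / real k < a) sequentially"
    using eventually_gt_at_top[of 0]
  proof eventually_elim
    case (elim k)
    have "?T k / real k \<le> (C + real k * lam) / real k"
      using C[of k] elim by (intro divide_right_mono) auto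
    then show ?case using elim by (simp add: add_divide_distrib)
  qed
next
  fix a
  assume "a < ?\<mu>"
  define lam where "lam = (a + ?\<mu>) / 2"
  have "sublevel f lam = {}"
  proof (rule ccontr)
    assume "sublevel f lam \<noteq> {}"
    then obtain z where "max_increment f z \<le> lam"
      using max_increment_le_iff by blast
    moreover have "?\<mu> \<le> max_increment f z"
      by (rule cInf_lower[OF _ bdd_below_max_increment[OF assms]]) simp
    ultimately show False
      using \<open>a < ?\<mu>\<close> lam_def by simp
  qed
  let ?m = "Min (range (\<lambda>i. x $ i))"
  have "(\<lambda>k. ?m / real k + lam) \<longlonglongrightarrow> 0 + lam"
    by (intro tendsto_intros)
  moreover have "a < 0 + lam"
    using \<open>a < ?\<mu>\<close> by (simp add: lam_def)
  ultimately have "eventually (\<lambda>k. a < ?m / real k + lam) sequentially"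
    by (rule order_tendstoD)
  then show "eventually (\<lambda>k. a < ?T k / real k) sequentially"
    using eventually_gt_at_top[of 0]
  proof eventually_elim
    case (elim k)
    have "(?m + real k * lam) / real k < ?T k / real k"
      using max_funpow_lower_bound[OF assms \<open>sublevel f lam = {}\<close>, of k x] elim
      by (intro divide_strict_right_mono) auto
    then show ?case using elim by (simp add: add_divide_distrib)
  qed
qed

theorem proposition2p3:
  fixes f :: "real^'n \<Rightarrow> real^'n"
  assumes "topical f"
  shows "Inf (Lambda_set f) = (INF x. Max (range (\<lambda>i. f x $ i - x $ i)))
       \<and> (\<forall>x. (INF y. Max (range (\<lambda>i. f y $ i - y $ i))) = upper_cycle_time f x)"
proof -
  have "upper_cycle_time f x = Inf (range (max_increment f))" for x
    unfolding upper_cycle_time_def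
    using LIMSEQ_max_funpow_div[OF assms] by (rule limI)
  then show ?thesis
    using Inf_Lambda_set[OF assms] by (simp add: max_increment_def)
qed

end
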